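(* Let $G\ge 2$ and $p_t\in[0,1]$. Let $r_{t,1},\dots,r_{t,G}\in\{0,1\}$ be the rewards of a group, $R=\sum_j r_{t,j}$, $\hat p_t=R/G$, $\hat A_{t,i}=r_{t,i}-\hat p_t$, $A_{t,i}=r_{t,i}-p_t$, and $\mathcal S=\{1\le R\le G-1\}$. Then on the event $\mathcal S$, for every $i\in[G]$: $\hat A_{t,i}<A_{t,i}$ surely if $p_t<1/G$, and $\hat A_{t,i}>A_{t,i}$ surely if $p_t>(G-1)/G$.
   Context: $p_t$ is the expected reward of the policy on the prompt; $\hat p_t$ is the group baseline, $\hat A_{t,i}$ the group-relative advantage, $A_{t,i}$ the expected advantage, and $\mathcal S$ the event that the group is neither all-correct nor all-incorrect. *)

theory Defs
  imports Complex_Main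
begin

end

theory Submission
  imports Defs
begin

theorem corollary3:
  fixes G :: nat and p :: real and r :: "nat \<Rightarrow> real"
  assumes G2: "G \<ge> 2"
    and p01: "0 \<le> p" "p \<le> 1"
    and rew: "\<forall>j\<in>{1..G}. r j \<in> {0, 1}"
    and S: "1 \<le> (\<Sum>j=1..G. r j)" "(\<Sum>j=1..G. r j) \<le> real G - 1"
  shows "\<forall>i\<in>{1..G}.
           (p < 1 / real G \<longrightarrow> r i - (\<Sum>j=1..G. r j) / real G < r i - p) \<and>
           (p > (real G - 1) / real G \<longrightarrow> r i - (\<Sum>j=1..G. r j) / real G > r i - p)"
proof -
  \<comment> \<open>Only the event S matters: on it the baseline lies in [1/G, (G-1)/G], so comparing
    it with p settles both cases.\<close>
  let ?R = "\<Sum>j=1..G. r j"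
  have "real G > 0" using G2 by simp
  then have "1 / real G \<le> ?R / real G" and "?R / real G \<le> (real G - 1) / real G"
    using S by (simp_all add: divide_right_mono)
  then show ?thesis by auto
qed

end
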